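(* Let $\mathcal{G}$ be an $A$-compatible P-graph with associated map $\mu$ satisfying condition ( * ): for every $\ell'\in\{1,\dots,m\}$ and $i\in\{1,\dots,d\}$, every directed path from $j_i$ to $\ell'$ that contains an edge in $\mathcal{E}^-$ goes through $m+1$. Let $k\in\{1,\dots,d+1\}$, $\widetilde B\in\mathcal{B}^k$, $\ell\in\{1,\dots,m+1\}\setminus\widetilde B$, $B=\widetilde B\cup\{\ell\}$. For $\zeta\in\Theta_\mathcal{G}(F,B)$ define \[\mathcal{E}^F_\zeta=\{E\subseteq\zeta\cap\operatorname{im}\mu : (\zeta\setminus E)\cup\mu^*(E)\in\Theta_\mathcal{G}(F,B)\}.\] Then $\mathcal{E}^F_\zeta$ is closed under union: if $E_1,E_2\in\mathcal{E}^F_\zeta$ then $E_1\cup E_2\in\mathcal{E}^F_\zeta$.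
   Context: $R$ is a partially ordered commutative ring. Let $d\ge0$, $m_0,\dots,m_d\ge0$ with $m=m_0+\cdots+m_d$. $A\in R^{m\times m}$, $b\in R^m$: for $i=1,\dots,d$ the rows indexed by $\mathcal{N}_i=\{1+\sum_{j<i}m_j,\dots,\sum_{j\le i}m_j\}$ are zero outside the columns indexed by $\mathcal{N}_i$, where they form a square $A_i$, and the corresponding subvector $b^i$ has at most one nonzero entry; the last $m_0$ rows form an arbitrary $A_0\in R^{m_0\times m}$ with arbitrary $b^0$. $\mathcal{N}=\{1,\dots,m+1\}$, $\mathcal{N}_0=\{m-m_0+1,\dots,m+1\}$, $\mathcal{N}_{d+1}=\{m+1\}$. Fixed $j_i\in\mathcal{N}_i$ with $b_j=0$ for all $j\le m-m_0$, $j\notin\{j_1,\dots,j_d\}$; $F=\{j_1,\dots,j_d,m+1\}$. $\mathcal{B}^k=\{\{w_j:j\in\{1,\dots,d+1\}\setminus\{k\}\}: w_j\in\mathcal{N}_j\}$. A multidigraph $\mathcal{G}=(\mathcal{N},\mathcal{E})$ has source/target maps $s,t$, no self-loops, labeling $\pi\colon\mathcal{E}\to R$, Laplacian $L_{ij}=\sum_{e:s(e)=j,t(e)=i}\pi(e)$ ($i\ne j$), $L_{ii}=-\sum_{k\ne i}L_{ki}$. $\mathcal{G}$ is $A$-compatible if (i) no edge goes from a node in $\mathcal{N}_i$ ($i\ge0$) to a node in $\mathcal{N}_j$ with $i\ne j$, $j\ge1$; (ii) for $\ell\notin F$ the $\ell$-th row of $L$ equals the $\ell$-th row of $(A\,|\,b)$.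 Trees/forests: subgraphs with acyclic underlying undirected graph (connected for trees), rooted at $N$ if $N$ is the only node without outgoing edges; spanning means node set $\mathcal{N}$; forests are identified with edge sets. $\Theta_\mathcal{G}(F,B)$ ($|F|=|B|$): spanning forests with $|B|$ components, each containing a node of $F$ and being a tree rooted at a node of $B$. A cycle is a closed directed path with no repeated nodes. $\mathcal{E}^-=\{e:\pi(e)\in R_{<0}\}$, $\mathcal{E}^+=\{e:\pi(e)\in R_{>0}\}$. $\mathcal{G}$ is a P-graph with associated map $\mu\colon\mathcal{E}^-\to\mathcal{P}(\mathcal{E}^+)$ if (i) $\mathcal{E}=\mathcal{E}^+\sqcup\mathcal{E}^-$; (ii) every cycle contains at most one edge of $\mathcal{E}^-$; (iii) for $e\in\mathcal{E}^-$: (a) $e'\in\mu(e)\Rightarrow s(e')=s(e)$; (b) $e'\in\mu(e)\Rightarrow$ every cycle containing $e'$ contains $t(e)$; (c) $\mu(e)\cap\mu(e')=\emptyset$ for $e\ne e'$; (iv) $\pi(e)+\sum_{e'\in\mu(e)}\pi(e')\in R_{\ge0}$ for all $e\in\mathcal{E}^-$. $\operatorname{im}\mu=\bigcup_e\mu(e)$, and $\mu^*\colon\operatorname{im}\mu\to\mathcal{E}^-$, $\mu^*(e')=e$ if $e'\in\mu(e)$. *)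

theory Defs
  imports Main
begin

text \<open>Nodes are the natural numbers 1..m+1.  The block sizes are m_0,...,m_d,
  given as a function mm; m = m_0 + ... + m_d.  The blocks N_1,...,N_d come
  first (in this order), the last m_0 indices 1..m belong to A_0.\<close>

definition msum :: "(nat \<Rightarrow> nat) \<Rightarrow> nat \<Rightarrow> nat" where
  "msum mm d = (\<Sum>j\<in>{0..d}. mm j)"

definition Nblk :: "(nat \<Rightarrow> nat) \<Rightarrow> nat \<Rightarrow> nat \<Rightarrow> nat set" where
  "Nblk mm d i =
     (if i = 0 then {msum mm d - mm 0 + 1 .. msum mm d + 1}
      else if i = d + 1 then {msum mm d + 1}
      else {1 + (\<Sum>j\<in>{1..<i}. mm j) .. (\<Sum>j\<in>{1..i}. mm j)})"

definition Bk :: "(nat \<Rightarrow> nat) \<Rightarrow> nat \<Rightarrow> nat \<Rightarrow> nat set set" where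
  "Bk mm d k = {w ` ({1..d+1} - {k}) | w. \<forall>j\<in>{1..d+1} - {k}. w j \<in> Nblk mm d j}"

definition lap :: "'e set \<Rightarrow> ('e \<Rightarrow> nat) \<Rightarrow> ('e \<Rightarrow> nat) \<Rightarrow> ('e \<Rightarrow> 'a::comm_ring) \<Rightarrow> nat
                   \<Rightarrow> nat \<Rightarrow> nat \<Rightarrow> 'a" where
  "lap E s t \<pi> n i j =
     (if i \<noteq> j then (\<Sum>e\<in>{e\<in>E. s e = j \<and> t e = i}. \<pi> e)
      else - (\<Sum>k\<in>{1..n} - {i}. (\<Sum>e\<in>{e\<in>E. s e = i \<and> t e = k}. \<pi> e)))"

text \<open>Undirected cycle in an edge set Z (length >= 2 is automatic without self-loops;
  two parallel or antiparallel edges form an undirected cycle).\<close>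
definition ucycle :: "('e \<Rightarrow> nat) \<Rightarrow> ('e \<Rightarrow> nat) \<Rightarrow> 'e set \<Rightarrow> 'e list \<Rightarrow> nat list \<Rightarrow> bool" where
  "ucycle s t Z es vs \<longleftrightarrow> es \<noteq> [] \<and> length vs = length es \<and> distinct es \<and> distinct vs
     \<and> set es \<subseteq> Z
     \<and> (\<forall>i<length es. {s (es!i), t (es!i)} = {vs!i, vs!((i+1) mod length es)})"

definition uacyclic :: "('e \<Rightarrow> nat) \<Rightarrow> ('e \<Rightarrow> nat) \<Rightarrow> 'e set \<Rightarrow> bool" where
  "uacyclic s t Z \<longleftrightarrow> \<not> (\<exists>es vs. ucycle s t Z es vs)"

definition uadj :: "('e \<Rightarrow> nat) \<Rightarrow> ('e \<Rightarrow> nat) \<Rightarrow> 'e set \<Rightarrow> (nat \<times> nat) set" where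
  "uadj s t Z = {(s e, t e) | e. e \<in> Z} \<union> {(t e, s e) | e. e \<in> Z}"

definition comps :: "nat set \<Rightarrow> ('e \<Rightarrow> nat) \<Rightarrow> ('e \<Rightarrow> nat) \<Rightarrow> 'e set \<Rightarrow> nat set set" where
  "comps V s t Z = {{y\<in>V. (x, y) \<in> (uadj s t Z)\<^sup>*} | x. x \<in> V}"

text \<open>\<Theta>_G(F,B): spanning forests (edge sets Z \<subseteq> E on the full node set V) with |B|
  components, each containing a node of F and being a tree rooted at a node of B
  (the root being the only node of the component without outgoing edges).\<close>
definition Theta :: "nat set \<Rightarrow> 'e set \<Rightarrow> ('e \<Rightarrow> nat) \<Rightarrow> ('e \<Rightarrow> nat) \<Rightarrow> nat set \<Rightarrow> nat set
                     \<Rightarrow> 'e set set" where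
  "Theta V E s t F B = {Z. Z \<subseteq> E \<and> uacyclic s t Z \<and> card (comps V s t Z) = card B
     \<and> (\<forall>C\<in>comps V s t Z. C \<inter> F \<noteq> {}
          \<and> (\<exists>r\<in>B \<inter> C. {v\<in>C. \<not> (\<exists>e\<in>Z. s e = v)} = {r}))}"

definition dcycle :: "('e \<Rightarrow> nat) \<Rightarrow> ('e \<Rightarrow> nat) \<Rightarrow> 'e set \<Rightarrow> 'e list \<Rightarrow> bool" where
  "dcycle s t E es \<longleftrightarrow> es \<noteq> [] \<and> set es \<subseteq> E
     \<and> (\<forall>i<length es. t (es!i) = s (es!((i+1) mod length es)))
     \<and> distinct (map s es)"

definition dpath :: "('e \<Rightarrow> nat) \<Rightarrow> ('e \<Rightarrow> nat) \<Rightarrow> 'e set \<Rightarrow> nat \<Rightarrow> nat \<Rightarrow> 'e list \<Rightarrow> bool" where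
  "dpath s t E u v es \<longleftrightarrow> set es \<subseteq> E
     \<and> (\<forall>i. i + 1 < length es \<longrightarrow> t (es!i) = s (es!(i+1)))
     \<and> (if es = [] then u = v else s (hd es) = u \<and> t (last es) = v)
     \<and> distinct (u # map t es)"

definition Eneg :: "'e set \<Rightarrow> ('e \<Rightarrow> 'a::ordered_comm_ring) \<Rightarrow> 'e set" where
  "Eneg E \<pi> = {e\<in>E. \<pi> e < 0}"

definition Epos :: "'e set \<Rightarrow> ('e \<Rightarrow> 'a::ordered_comm_ring) \<Rightarrow> 'e set" where
  "Epos E \<pi> = {e\<in>E. \<pi> e > 0}"

definition P_graph :: "'e set \<Rightarrow> ('e \<Rightarrow> nat) \<Rightarrow> ('e \<Rightarrow> nat) \<Rightarrow> ('e \<Rightarrow> 'a::ordered_comm_ring)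
                       \<Rightarrow> ('e \<Rightarrow> 'e set) \<Rightarrow> bool" where
  "P_graph E s t \<pi> \<mu> \<longleftrightarrow>
     E = Epos E \<pi> \<union> Eneg E \<pi>
     \<and> (\<forall>es. dcycle s t E es \<longrightarrow> card {i. i < length es \<and> es!i \<in> Eneg E \<pi>} \<le> 1)
     \<and> (\<forall>e\<in>Eneg E \<pi>. \<mu> e \<subseteq> Epos E \<pi>
          \<and> (\<forall>e'\<in>\<mu> e. s e' = s e)
          \<and> (\<forall>e'\<in>\<mu> e. \<forall>es. dcycle s t E es \<and> e' \<in> set es \<longrightarrow> t e \<in> set (map s es))
          \<and> (\<forall>e2\<in>Eneg E \<pi>. e2 \<noteq> e \<longrightarrow> \<mu> e \<inter> \<mu> e2 = {})
          \<and> \<pi> e + (\<Sum>e'\<in>\<mu> e. \<pi> e') \<ge> 0)"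

definition im_mu :: "'e set \<Rightarrow> ('e \<Rightarrow> 'a::ordered_comm_ring) \<Rightarrow> ('e \<Rightarrow> 'e set) \<Rightarrow> 'e set" where
  "im_mu E \<pi> \<mu> = (\<Union>e\<in>Eneg E \<pi>. \<mu> e)"

definition mu_star :: "'e set \<Rightarrow> ('e \<Rightarrow> 'a::ordered_comm_ring) \<Rightarrow> ('e \<Rightarrow> 'e set) \<Rightarrow> 'e \<Rightarrow> 'e" where
  "mu_star E \<pi> \<mu> e' = (THE e. e \<in> Eneg E \<pi> \<and> e' \<in> \<mu> e)"

text \<open>A :: rows/columns 1..m, b :: entries 1..m.  Row l of (A | b) at column c \<le> m is A l c,
  at column m+1 it is b l.\<close>
definition block_structure ::
  "(nat \<Rightarrow> nat) \<Rightarrow> nat \<Rightarrow> (nat \<Rightarrow> nat \<Rightarrow> 'a::comm_ring) \<Rightarrow> (nat \<Rightarrow> 'a) \<Rightarrow> (nat \<Rightarrow> nat) \<Rightarrow> bool" where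
  "block_structure mm d A b jj \<longleftrightarrow>
     (\<forall>i\<in>{1..d}. \<forall>l\<in>Nblk mm d i. \<forall>c\<in>{1..msum mm d} - Nblk mm d i. A l c = 0)
     \<and> (\<forall>i\<in>{1..d}. card {j\<in>Nblk mm d i. b j \<noteq> 0} \<le> 1)
     \<and> (\<forall>i\<in>{1..d}. jj i \<in> Nblk mm d i)
     \<and> (\<forall>j\<in>{1..msum mm d - mm 0} - jj ` {1..d}. b j = 0)"

definition Fset :: "(nat \<Rightarrow> nat) \<Rightarrow> nat \<Rightarrow> (nat \<Rightarrow> nat) \<Rightarrow> nat set" where
  "Fset mm d jj = jj ` {1..d} \<union> {msum mm d + 1}"

definition multidigraph :: "nat \<Rightarrow> 'e set \<Rightarrow> ('e \<Rightarrow> nat) \<Rightarrow> ('e \<Rightarrow> nat) \<Rightarrow> bool" where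
  "multidigraph n E s t \<longleftrightarrow> finite E
     \<and> (\<forall>e\<in>E. s e \<in> {1..n} \<and> t e \<in> {1..n} \<and> s e \<noteq> t e)"

definition A_compatible ::
  "(nat \<Rightarrow> nat) \<Rightarrow> nat \<Rightarrow> (nat \<Rightarrow> nat \<Rightarrow> 'a::comm_ring) \<Rightarrow> (nat \<Rightarrow> 'a) \<Rightarrow> (nat \<Rightarrow> nat)
    \<Rightarrow> 'e set \<Rightarrow> ('e \<Rightarrow> nat) \<Rightarrow> ('e \<Rightarrow> nat) \<Rightarrow> ('e \<Rightarrow> 'a) \<Rightarrow> bool" where
  "A_compatible mm d A b jj E s t \<pi> \<longleftrightarrow>
     (\<forall>e\<in>E. \<forall>i\<in>{0..d}. \<forall>j\<in>{1..d}. i \<noteq> j \<longrightarrow>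
        \<not> (s e \<in> Nblk mm d i \<and> t e \<in> Nblk mm d j))
     \<and> (\<forall>l\<in>{1..msum mm d + 1} - Fset mm d jj.
          (\<forall>c\<in>{1..msum mm d}. lap E s t \<pi> (msum mm d + 1) l c = A l c)
          \<and> lap E s t \<pi> (msum mm d + 1) l (msum mm d + 1) = b l)"

end

theory Submission
  imports Defs
begin

text \<open>Since \<open>\<mu>\<^sup>*(e)\<close> has the same source as \<open>e\<close>, every exchange
  \<open>(\<zeta> \<setminus> X) \<union> \<mu>\<^sup>*(X)\<close> keeps out-degrees and sinks of \<open>\<zeta>\<close>. A directed cycle in the exchange
  along \<open>E\<^sub>1 \<union> E\<^sub>2\<close> would have to leave both acyclic single exchanges, hence contain two
  negative edges, which a P-graph forbids. So the union exchange is again a forest with sinks \<open>B\<close>,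
  and it remains to see that each root is still reached from \<open>F\<close>. As \<open>|F| = |B|\<close>, the trees of
  a forest in \<open>\<Theta>(F, B)\<close> separate the nodes of \<open>F\<close>; hence in the single exchanges the root path
  of \<open>j\<^sub>i\<close> never meets \<open>m + 1\<close>, by (*) it has no negative edge, so it is a path of \<open>\<zeta>\<close>
  avoiding \<open>E\<^sub>1\<close> and \<open>E\<^sub>2\<close> and survives in the union. The root of \<open>m + 1\<close> is determined by
  \<open>B\<close> alone: it is \<open>m + 1\<close> unless \<open>k = d + 1\<close>, when the block \<open>\<N>\<^sub>0\<close> is closed under edges
  and meets \<open>B\<close> only in \<open>lB\<close>.\<close>

section \<open>Directed cycles and undirected paths\<close>

lemma dcycle_imp_ucycle:
  assumes "dcycle s t Z es"
  shows "ucycle s t Z es (map s es)"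
proof -
  from assms have ne: "es \<noteq> []" and sub: "set es \<subseteq> Z"
    and nx: "\<forall>i<length es. t (es!i) = s (es!((i+1) mod length es))"
    and ds: "distinct (map s es)"
    unfolding dcycle_def by auto
  have "{s (es!i), t (es!i)} = {map s es ! i, map s es ! ((i+1) mod length es)}"
    if "i < length es" for i
    using nx that ne by simp
  with ne sub ds show ?thesis
    unfolding ucycle_def by (auto simp: distinct_map)
qed

lemma uacyclic_no_dcycle: "uacyclic s t Z \<Longrightarrow> \<not> dcycle s t Z es"
  using dcycle_imp_ucycle unfolding uacyclic_def by blast

lemma dcycle_mono: "dcycle s t Z es \<Longrightarrow> set es \<subseteq> Z' \<Longrightarrow> dcycle s t Z' es"
  unfolding dcycle_def by auto

lemma first_repetition:
  fixes q :: "nat \<Rightarrow> 'a"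
  assumes fin: "finite D" and in_D: "\<And>n. q n \<in> D"
  obtains i j where "i < j" "q i = q j" "inj_on q {..<j}"
proof -
  have "\<not> inj_on q {..card D}"
  proof
    assume "inj_on q {..card D}"
    then have "card (q ` {..card D}) = Suc (card D)" by (simp add: card_image)
    moreover have "card (q ` {..card D}) \<le> card D" using in_D fin by (intro card_mono) auto
    ultimately show False by simp
  qed
  then obtain a b where "a \<noteq> b" "q a = q b" unfolding inj_on_def by blast
  then have ex: "\<exists>j. \<exists>i<j. q i = q j" by (metis linorder_neqE_nat)
  define j where "j = (LEAST j. \<exists>i<j. q i = q j)"
  obtain i where "i < j" "q i = q j" using LeastI_ex[OF ex] unfolding j_def[symmetric] by blast
  moreover have "inj_on q {..<j}"
  proof (rule inj_onI)
    fix a b assume ab: "a \<in> {..<j}" "b \<in> {..<j}" and eq: "q a = q b"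
    have no_earlier: "q a' \<noteq> q b'" if "a' < b'" "b' < j" for a' b'
      using not_less_Least[of b' "\<lambda>j. \<exists>i<j. q i = q j"] that unfolding j_def by blast
    show "a = b"
      using ab eq no_earlier[of a b] no_earlier[of b a] by (cases a b rule: linorder_cases) auto
  qed
  ultimately show ?thesis using that by blast
qed

text \<open>Following out-edges inside a finite set that is never left must eventually revisit a node.\<close>
lemma closed_sink_free_imp_dcycle:
  assumes fin: "finite D" and ne: "D \<noteq> {}"
    and closed: "\<forall>u\<in>D. \<exists>e\<in>Z. s e = u \<and> t e \<in> D"
  shows "\<exists>es. dcycle s t Z es"
proof -
  define f where "f u = (SOME e. e \<in> Z \<and> s e = u \<and> t e \<in> D)" for u
  have f: "f u \<in> Z \<and> s (f u) = u \<and> t (f u) \<in> D" if "u \<in> D" for u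
    using someI_ex[of "\<lambda>e. e \<in> Z \<and> s e = u \<and> t e \<in> D"] closed that unfolding f_def by blast
  obtain x0 where x0: "x0 \<in> D" using ne by auto
  define q where "q n = ((t \<circ> f) ^^ n) x0" for n
  have qSuc: "q (Suc n) = t (f (q n))" for n by (simp add: q_def)
  have qD: "q n \<in> D" for n
    by (induction n) (auto simp: qSuc f x0 q_def[of 0])
  obtain i0 j0 where i0: "i0 < j0" "q i0 = q j0" and inj: "inj_on q {..<j0}"
    using first_repetition[OF fin qD] .
  define es where "es = map (\<lambda>p. f (q p)) [i0..<j0]"
  have len: "length es = j0 - i0" by (simp add: es_def)
  have es_nth: "es ! p = f (q (i0 + p))" if "p < j0 - i0" for p
    using that by (simp add: es_def)
  have "dcycle s t Z es"
    unfolding dcycle_def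
  proof (intro conjI allI impI)
    show "es \<noteq> []" using i0 by (simp add: es_def)
    show "set es \<subseteq> Z" using f qD by (auto simp: es_def)
  next
    fix p assume p: "p < length es"
    have "t (es ! p) = q (Suc (i0 + p))" using p len es_nth qD f by (simp add: qSuc)
    moreover have "s (es ! ((p + 1) mod length es)) = q (Suc (i0 + p))"
    proof (cases "p + 1 < length es")
      case True
      then show ?thesis using len es_nth f qD by simp
    next
      case False
      then have "p + 1 = length es" using p by simp
      then have "(p + 1) mod length es = 0" and "Suc (i0 + p) = j0" using len i0 by auto
      then show ?thesis using len es_nth[of 0] f qD i0 by simp
    qed
    ultimately show "t (es ! p) = s (es ! ((p + 1) mod length es))" by simp
  next
    have "map s es = map q [i0..<j0]" using f qD by (simp add: es_def)
    moreover have "inj_on q {i0..<j0}" using inj by (rule inj_on_subset) auto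
    ultimately show "distinct (map s es)" by (simp add: distinct_map)
  qed
  then show ?thesis by blast
qed

lemma uadj_edge: "e \<in> Z \<Longrightarrow> (s e, t e) \<in> uadj s t Z \<and> (t e, s e) \<in> uadj s t Z"
  unfolding uadj_def by auto

lemma uadj_rtrancl_sym: "(a, b) \<in> (uadj s t Z)\<^sup>* \<Longrightarrow> (b, a) \<in> (uadj s t Z)\<^sup>*"
proof -
  have "sym (uadj s t Z)" unfolding uadj_def sym_def by blast
  then show "(a, b) \<in> (uadj s t Z)\<^sup>* \<Longrightarrow> (b, a) \<in> (uadj s t Z)\<^sup>*"
    by (meson sym_rtrancl symD)
qed

lemma uadj_rtrancl_mono: "Z' \<subseteq> Z \<Longrightarrow> (uadj s t Z')\<^sup>* \<subseteq> (uadj s t Z)\<^sup>*"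
  by (rule rtrancl_mono) (auto simp: uadj_def)

definition upath :: "('e \<Rightarrow> nat) \<Rightarrow> ('e \<Rightarrow> nat) \<Rightarrow> 'e set \<Rightarrow> nat \<Rightarrow> nat \<Rightarrow> 'e list \<Rightarrow> nat list \<Rightarrow> bool" where
  "upath s t Z x y es vs \<longleftrightarrow> length vs = Suc (length es) \<and> vs!0 = x \<and> vs!(length es) = y
     \<and> set es \<subseteq> Z \<and> distinct vs \<and> (\<forall>i<length es. {s (es!i), t (es!i)} = {vs!i, vs!(Suc i)})"

lemma rtrancl_uadj_imp_upath:
  assumes "(x, y) \<in> (uadj s t Z)\<^sup>*"
  shows "\<exists>es vs. upath s t Z x y es vs"
  using assms
proof (induction rule: rtrancl_induct)
  case base
  have "upath s t Z x x [] [x]" by (simp add: upath_def)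
  then show ?case by blast
next
  case (step y z)
  then obtain es vs where P: "upath s t Z x y es vs" by blast
  from step(2) obtain e where e: "e \<in> Z" "{s e, t e} = {y, z}" unfolding uadj_def by auto
  show ?case
  proof (cases "z \<in> set vs")
    case True
    then obtain k where k: "k < length vs" "vs!k = z" by (auto simp: in_set_conv_nth)
    then have "upath s t Z x z (take k es) (take (Suc k) vs)"
      using P set_take_subset[of k es] by (auto simp: upath_def)
    then show ?thesis by blast
  next
    case False
    have "upath s t Z x z (es @ [e]) (vs @ [z])"
      using P e False by (auto simp: upath_def nth_append less_Suc_eq)
    then show ?thesis by blast
  qed
qed

lemma upath_distinct_edges:
  assumes "upath s t Z x y es vs"
  shows "distinct es"
proof -
  from assms have len: "length vs = Suc (length es)" and dv: "distinct vs"
    and ends: "\<forall>i<length es. {s (es!i), t (es!i)} = {vs!i, vs!(Suc i)}"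
    unfolding upath_def by auto
  show ?thesis
  proof (rule distinct_conv_nth[THEN iffD2], intro allI impI)
    fix i j assume ij: "i < length es" "j < length es" "i \<noteq> j"
    show "es ! i \<noteq> es ! j"
    proof
      assume "es ! i = es ! j"
      then have "{vs!i, vs!(Suc i)} = {vs!j, vs!(Suc j)}" using ends ij by metis
      then show False using dv ij len by (auto simp: doubleton_eq_iff nth_eq_iff_index_eq)
    qed
  qed
qed

lemma upath_close_ucycle:
  assumes P: "upath s t Z x y es vs" and e: "e \<notin> Z" "{s e, t e} = {y, x}"
  shows "ucycle s t (insert e Z) (es @ [e]) vs"
proof -
  from P have len: "length vs = Suc (length es)" and ends: "vs!0 = x" "vs!(length es) = y"
    and steps: "\<forall>i<length es. {s (es!i), t (es!i)} = {vs!i, vs!(Suc i)}"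
    unfolding upath_def by auto
  have "{s ((es @ [e]) ! i), t ((es @ [e]) ! i)} = {vs ! i, vs ! ((i + 1) mod length (es @ [e]))}"
    if "i < length (es @ [e])" for i
  proof (cases "i < length es")
    case True
    then show ?thesis using steps by (simp add: nth_append)
  next
    case False
    then have "i = length es" using that by simp
    then show ?thesis using e ends by (simp add: nth_append insert_commute)
  qed
  then show ?thesis
    using P e upath_distinct_edges[OF P] len unfolding upath_def ucycle_def by auto
qed

definition sink :: "('e \<Rightarrow> nat) \<Rightarrow> 'e set \<Rightarrow> nat \<Rightarrow> bool" where
  "sink s Z v \<longleftrightarrow> \<not> (\<exists>e\<in>Z. s e = v)"

lemma reach_set_sink_free_imp_dcycle:
  assumes "finite V" and "a \<in> V" and edges: "\<forall>e\<in>Z. s e \<in> V \<and> t e \<in> V"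
    and no_sink: "\<forall>u\<in>V. (a, u) \<in> (uadj s t Z)\<^sup>* \<longrightarrow> \<not> sink s Z u"
  shows "\<exists>es. dcycle s t Z es"
proof (rule closed_sink_free_imp_dcycle)
  let ?D = "{u\<in>V. (a, u) \<in> (uadj s t Z)\<^sup>*}"
  show "finite ?D" "?D \<noteq> {}" using assms by auto
  show "\<forall>u\<in>?D. \<exists>e\<in>Z. s e = u \<and> t e \<in> ?D"
  proof
    fix u assume u: "u \<in> ?D"
    then obtain e where e: "e \<in> Z" "s e = u" using no_sink unfolding sink_def by blast
    then have "(u, t e) \<in> uadj s t Z" using uadj_edge by metis
    then have "(a, t e) \<in> (uadj s t Z)\<^sup>*" using u by (blast intro: rtrancl_into_rtrancl)
    then show "\<exists>e\<in>Z. s e = u \<and> t e \<in> ?D" using e edges by blast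
  qed
qed

lemma uacyclic_delete_edge_disconnects:
  assumes uac: "uacyclic s t Z" and e: "e \<in> Z"
  shows "(s e, t e) \<notin> (uadj s t (Z - {e}))\<^sup>*"
proof
  assume "(s e, t e) \<in> (uadj s t (Z - {e}))\<^sup>*"
  then obtain es vs where "upath s t (Z - {e}) (s e) (t e) es vs" using rtrancl_uadj_imp_upath by blast
  then have "ucycle s t (insert e (Z - {e})) (es @ [e]) vs" by (rule upath_close_ucycle) auto
  then show False using uac e unfolding uacyclic_def by (metis insert_Diff)
qed

lemma Theta_component_sink:
  assumes Th: "Z \<in> Theta V E s t F B" and v: "v \<in> V"
  obtains r where "\<And>u. u \<in> V \<Longrightarrow> (v, u) \<in> (uadj s t Z)\<^sup>* \<Longrightarrow> u \<noteq> r \<Longrightarrow> \<not> sink s Z u"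
proof -
  define C where "C = {y\<in>V. (v, y) \<in> (uadj s t Z)\<^sup>*}"
  have "C \<in> comps V s t Z" unfolding comps_def C_def using v by blast
  moreover have "\<forall>C\<in>comps V s t Z. \<exists>r\<in>B \<inter> C. {v\<in>C. \<not> (\<exists>e\<in>Z. s e = v)} = {r}"
    using Th unfolding Theta_def by auto
  ultimately have "\<exists>r\<in>B \<inter> C. {u\<in>C. \<not> (\<exists>e\<in>Z. s e = u)} = {r}" by blast
  then obtain r where r: "{u\<in>C. \<not> (\<exists>e\<in>Z. s e = u)} = {r}" by blast
  have "\<not> sink s Z u" if "u \<in> V" "(v, u) \<in> (uadj s t Z)\<^sup>*" "u \<noteq> r" for u
  proof -
    have "u \<in> C" "u \<notin> {u\<in>C. \<not> (\<exists>e\<in>Z. s e = u)}" using that r unfolding C_def by auto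
    then show ?thesis unfolding sink_def by blast
  qed
  then show thesis by (rule that)
qed

text \<open>If a node had two out-edges \<open>e\<^sub>1, e\<^sub>2\<close>, delete \<open>e\<^sub>2\<close>: either its endpoints stay connected,
  closing an undirected cycle, or the component splits and the half avoiding the unique sink
  is sink-free (\<open>e\<^sub>1\<close> replaces \<open>e\<^sub>2\<close>), hence contains a directed cycle.\<close>
lemma Theta_out_edge_unique:
  assumes Th: "Z \<in> Theta V E s t F B" and "finite V"
    and edges: "\<forall>e\<in>Z. s e \<in> V \<and> t e \<in> V"
    and e1: "e1 \<in> Z" and e2: "e2 \<in> Z" and same_source: "s e1 = s e2"
  shows "e1 = e2"
proof (rule ccontr)
  assume ne: "e1 \<noteq> e2"
  define v where "v = s e2"
  define Z' where "Z' = Z - {e2}"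
  have Z'Z: "Z' \<subseteq> Z" and e1Z': "e1 \<in> Z'" using e1 e2 ne by (auto simp: Z'_def)
  have uac: "uacyclic s t Z" using Th unfolding Theta_def by auto
  have vV: "v \<in> V" using edges e2 v_def by auto
  obtain r where only_sink: "\<And>u. u \<in> V \<Longrightarrow> (v, u) \<in> (uadj s t Z)\<^sup>* \<Longrightarrow> u \<noteq> r \<Longrightarrow> \<not> sink s Z u"
    using Theta_component_sink[OF Th vV] by blast
  have "(v, t e2) \<notin> (uadj s t Z')\<^sup>*"
    using uacyclic_delete_edge_disconnects[OF uac e2] unfolding v_def Z'_def .
  then have "(v, r) \<notin> (uadj s t Z')\<^sup>* \<or> (t e2, r) \<notin> (uadj s t Z')\<^sup>*"
    using uadj_rtrancl_sym[of "t e2" r] rtrancl_trans[of v r] by blast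
  then obtain a where a: "a \<in> {v, t e2}" and r_unreached: "(a, r) \<notin> (uadj s t Z')\<^sup>*"
    by blast
  have v_t: "(v, t e2) \<in> (uadj s t Z)\<^sup>*" using uadj_edge[OF e2] v_def by auto
  have "\<exists>es. dcycle s t Z' es"
  proof (rule reach_set_sink_free_imp_dcycle[OF \<open>finite V\<close>])
    show "a \<in> V" using a vV edges e2 by auto
    show "\<forall>e\<in>Z'. s e \<in> V \<and> t e \<in> V" using edges Z'Z by blast
    show "\<forall>u\<in>V. (a, u) \<in> (uadj s t Z')\<^sup>* \<longrightarrow> \<not> sink s Z' u"
    proof (intro ballI impI)
      fix u assume "u \<in> V" and au: "(a, u) \<in> (uadj s t Z')\<^sup>*"
      then have "(a, u) \<in> (uadj s t Z)\<^sup>*" using uadj_rtrancl_mono[OF Z'Z] by blast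
      then have "(v, u) \<in> (uadj s t Z)\<^sup>*" using a v_t by (auto intro: rtrancl_trans[of v "t e2"])
      moreover have "u \<noteq> r" using au r_unreached by blast
      ultimately obtain e where e: "e \<in> Z" "s e = u"
        using only_sink \<open>u \<in> V\<close> unfolding sink_def by blast
      show "\<not> sink s Z' u"
        using e e1Z' same_source unfolding sink_def Z'_def by (cases "e = e2") auto
    qed
  qed
  then obtain es where "dcycle s t Z' es" by blast
  moreover from this have "set es \<subseteq> Z" using Z'Z unfolding dcycle_def by blast
  ultimately have "dcycle s t Z es" by (rule dcycle_mono)
  then show False using uac uacyclic_no_dcycle by blast
qed

section \<open>Forests with out-degree at most one\<close>

definition out_edge :: "('e \<Rightarrow> nat) \<Rightarrow> 'e set \<Rightarrow> nat \<Rightarrow> 'e" where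
  "out_edge s Z v = (THE e. e \<in> Z \<and> s e = v)"

definition forest_next :: "('e \<Rightarrow> nat) \<Rightarrow> ('e \<Rightarrow> nat) \<Rightarrow> 'e set \<Rightarrow> nat \<Rightarrow> nat" where
  "forest_next s t Z v = (if sink s Z v then v else t (out_edge s Z v))"

definition forest_height :: "('e \<Rightarrow> nat) \<Rightarrow> ('e \<Rightarrow> nat) \<Rightarrow> 'e set \<Rightarrow> nat \<Rightarrow> nat" where
  "forest_height s t Z v = (LEAST n. sink s Z ((forest_next s t Z ^^ n) v))"

definition forest_root :: "('e \<Rightarrow> nat) \<Rightarrow> ('e \<Rightarrow> nat) \<Rightarrow> 'e set \<Rightarrow> nat \<Rightarrow> nat" where
  "forest_root s t Z v = (forest_next s t Z ^^ forest_height s t Z v) v"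

definition root_path :: "('e \<Rightarrow> nat) \<Rightarrow> ('e \<Rightarrow> nat) \<Rightarrow> 'e set \<Rightarrow> nat \<Rightarrow> nat \<Rightarrow> 'e list" where
  "root_path s t Z v n = map (\<lambda>p. out_edge s Z ((forest_next s t Z ^^ p) v)) [0..<n]"

definition root_path_edges :: "('e \<Rightarrow> nat) \<Rightarrow> ('e \<Rightarrow> nat) \<Rightarrow> 'e set \<Rightarrow> nat \<Rightarrow> 'e set" where
  "root_path_edges s t Z v = set (root_path s t Z v (forest_height s t Z v))"

locale functional_forest =
  fixes V :: "nat set" and s t :: "'e \<Rightarrow> nat" and Z :: "'e set"
  assumes finite_nodes: "finite V"
    and edge_nodes: "e \<in> Z \<Longrightarrow> s e \<in> V \<and> t e \<in> V"
    and no_loop: "e \<in> Z \<Longrightarrow> s e \<noteq> t e"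
    and out_edge_unique: "e1 \<in> Z \<Longrightarrow> e2 \<in> Z \<Longrightarrow> s e1 = s e2 \<Longrightarrow> e1 = e2"
    and no_dcycle: "\<not> dcycle s t Z es"
begin

abbreviation "nxt \<equiv> forest_next s t Z"
abbreviation "height \<equiv> forest_height s t Z"
abbreviation "root \<equiv> forest_root s t Z"

lemma out_edge_eq: "e \<in> Z \<Longrightarrow> out_edge s Z (s e) = e"
  unfolding out_edge_def using out_edge_unique by (intro the_equality) auto

lemma out_edge_in: "\<not> sink s Z v \<Longrightarrow> out_edge s Z v \<in> Z \<and> s (out_edge s Z v) = v"
  using out_edge_eq unfolding sink_def by auto

lemma nxt_edge: "e \<in> Z \<Longrightarrow> nxt (s e) = t e"
  using out_edge_eq unfolding forest_next_def sink_def by auto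

lemma nxt_sink: "sink s Z v \<Longrightarrow> nxt v = v"
  unfolding forest_next_def by simp

lemma nxt_not_sink: "\<not> sink s Z v \<Longrightarrow> nxt v = t (out_edge s Z v)"
  unfolding forest_next_def by simp

lemma nxt_in: "v \<in> V \<Longrightarrow> nxt v \<in> V"
  using out_edge_in edge_nodes unfolding forest_next_def by auto

lemma nxt_pow_in: "v \<in> V \<Longrightarrow> (nxt ^^ n) v \<in> V"
  by (induction n) (auto simp: nxt_in)

lemma nxt_pow_Suc: "(nxt ^^ n) (nxt v) = (nxt ^^ Suc n) v"
  by (simp add: funpow_swap1)

text \<open>Nodes that never reach a sink form a nonempty closed sink-free set, so there would be a
  directed cycle.\<close>
lemma reaches_sink: "v \<in> V \<Longrightarrow> \<exists>n. sink s Z ((nxt ^^ n) v)"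
proof (rule ccontr)
  assume v: "v \<in> V" and never: "\<nexists>n. sink s Z ((nxt ^^ n) v)"
  define D where "D = {u\<in>V. \<forall>n. \<not> sink s Z ((nxt ^^ n) u)}"
  have "\<exists>es. dcycle s t Z es"
  proof (rule closed_sink_free_imp_dcycle)
    show "finite D" using finite_nodes by (simp add: D_def)
    show "D \<noteq> {}" using v never by (auto simp: D_def)
    show "\<forall>u\<in>D. \<exists>e\<in>Z. s e = u \<and> t e \<in> D"
    proof
      fix u assume u: "u \<in> D"
      then have ns: "\<not> sink s Z u" unfolding D_def by (metis (mono_tags) funpow_0 mem_Collect_eq)
      have "\<not> sink s Z ((nxt ^^ n) (nxt u))" for n
        using u unfolding nxt_pow_Suc D_def by blast
      then have "nxt u \<in> D" using u nxt_in unfolding D_def by auto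
      then show "\<exists>e\<in>Z. s e = u \<and> t e \<in> D" using out_edge_in[OF ns] nxt_not_sink[OF ns] by metis
    qed
  qed
  then show False using no_dcycle by simp
qed

lemma root_sink: "v \<in> V \<Longrightarrow> sink s Z (root v)"
  unfolding forest_root_def forest_height_def using reaches_sink by (rule LeastI_ex)

lemma not_sink_below_height: "n < height v \<Longrightarrow> \<not> sink s Z ((nxt ^^ n) v)"
  unfolding forest_height_def by (rule not_less_Least)

lemma height_eqI:
  "sink s Z ((nxt ^^ n) v) \<Longrightarrow> (\<forall>p<n. \<not> sink s Z ((nxt ^^ p) v)) \<Longrightarrow> height v = n"
  unfolding forest_height_def by (rule Least_equality) (auto simp: not_le[symmetric])

lemma root_of_sink: "sink s Z v \<Longrightarrow> root v = v"
  using height_eqI[of 0 v] unfolding forest_root_def by simp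

lemma height_root_nxt:
  assumes v: "v \<in> V" and ns: "\<not> sink s Z v"
  shows "height v = Suc (height (nxt v)) \<and> root (nxt v) = root v"
proof -
  define N where "N = height (nxt v)"
  have "sink s Z ((nxt ^^ Suc N) v)"
    using root_sink[OF nxt_in[OF v]] unfolding N_def forest_root_def nxt_pow_Suc .
  moreover have "\<forall>p<Suc N. \<not> sink s Z ((nxt ^^ p) v)"
    using ns not_sink_below_height[of _ "nxt v"] unfolding N_def
    by (metis funpow_0 less_Suc_eq_0_disj nxt_pow_Suc)
  ultimately have "height v = Suc N" by (rule height_eqI)
  then show ?thesis unfolding forest_root_def N_def nxt_pow_Suc by simp
qed

lemma root_nxt: "v \<in> V \<Longrightarrow> root (nxt v) = root v"
  using height_root_nxt nxt_sink by (cases "sink s Z v") auto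

lemma root_nxt_pow: "v \<in> V \<Longrightarrow> root ((nxt ^^ n) v) = root v"
  by (induction n) (auto simp: root_nxt nxt_pow_in)

lemma root_in: "v \<in> V \<Longrightarrow> root v \<in> V"
  unfolding forest_root_def by (rule nxt_pow_in)

lemma height_edge: "e \<in> Z \<Longrightarrow> height (s e) = Suc (height (t e))"
  using height_root_nxt[of "s e"] edge_nodes nxt_edge unfolding sink_def by auto

lemma root_edge: "e \<in> Z \<Longrightarrow> root (s e) = root (t e)"
  using root_nxt[of "s e"] edge_nodes nxt_edge by auto

lemma height_nxt_pow: "v \<in> V \<Longrightarrow> n \<le> height v \<Longrightarrow> height ((nxt ^^ n) v) = height v - n"
proof (induction n)
  case (Suc n)
  then have "\<not> sink s Z ((nxt ^^ n) v)" using not_sink_below_height by simp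
  then show ?case using Suc height_root_nxt[OF nxt_pow_in] by simp
qed simp

lemma root_path_step:
  assumes "p < height v"
  shows "out_edge s Z ((nxt ^^ p) v) \<in> Z \<and> s (out_edge s Z ((nxt ^^ p) v)) = (nxt ^^ p) v
      \<and> t (out_edge s Z ((nxt ^^ p) v)) = (nxt ^^ Suc p) v"
  using not_sink_below_height[OF assms] out_edge_in nxt_not_sink by simp

lemma root_path_nodes:
  "n \<le> height v \<Longrightarrow> v # map t (root_path s t Z v n) = map (\<lambda>p. (nxt ^^ p) v) [0..<Suc n]"
  using root_path_step unfolding root_path_def by (simp add: map_upt_Suc del: upt_Suc)

lemma root_path_dpath:
  assumes v: "v \<in> V" and n: "n \<le> height v" and "Z \<subseteq> E"
  shows "dpath s t E v ((nxt ^^ n) v) (root_path s t Z v n)"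
proof -
  let ?es = "root_path s t Z v n"
  note nodes = root_path_nodes[OF n]
  have "inj_on (\<lambda>p. (nxt ^^ p) v) {0..<Suc n}"
  proof (rule inj_onI)
    fix a b assume "a \<in> {0..<Suc n}" "b \<in> {0..<Suc n}" "(nxt ^^ a) v = (nxt ^^ b) v"
    then have "height v - a = height v - b" and "a \<le> height v" "b \<le> height v"
      using height_nxt_pow[OF v, of a] height_nxt_pow[OF v, of b] n by auto
    then show "a = b" by simp
  qed
  then have "distinct (v # map t ?es)" unfolding nodes by (simp add: distinct_map del: upt_Suc)
  moreover have "?es \<noteq> [] \<Longrightarrow> s (hd ?es) = v \<and> t (last ?es) = (nxt ^^ n) v"
    using root_path_step[of 0] root_path_step[of "n - 1"] n
    by (cases n) (auto simp: root_path_def hd_map last_map simp del: upt_Suc)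
  moreover have "t (?es ! i) = s (?es ! (i + 1))" if "i + 1 < length ?es" for i
    using that root_path_step[of i v] root_path_step[of "Suc i" v] n
    unfolding root_path_def by (simp del: funpow.simps)
  moreover have "set ?es \<subseteq> E"
    using root_path_step n \<open>Z \<subseteq> E\<close> unfolding root_path_def by auto
  moreover have "?es = [] \<Longrightarrow> v = (nxt ^^ n) v" by (simp add: root_path_def)
  ultimately show ?thesis unfolding dpath_def by auto
qed

lemma uadj_root:
  assumes "(x, y) \<in> uadj s t Z"
  shows "x \<in> V \<and> y \<in> V \<and> root x = root y"
proof -
  from assms obtain e where e: "e \<in> Z" "x = s e \<and> y = t e \<or> x = t e \<and> y = s e"
    unfolding uadj_def by blast
  then show ?thesis using root_edge[OF e(1)] edge_nodes[OF e(1)] by auto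
qed

lemma rtrancl_uadj_root:
  assumes "x \<in> V" "(x, y) \<in> (uadj s t Z)\<^sup>*"
  shows "y \<in> V \<and> root y = root x"
  using assms(2)
proof (induction rule: rtrancl_induct)
  case base
  then show ?case using assms(1) by simp
next
  case (step y z)
  then show ?case using uadj_root[of y z] by simp
qed

lemma rtrancl_uadj_nxt_pow: "(x, (nxt ^^ n) x) \<in> (uadj s t Z)\<^sup>*"
proof (induction n)
  case (Suc n)
  let ?u = "(nxt ^^ n) x"
  have "(?u, nxt ?u) \<in> (uadj s t Z)\<^sup>*"
  proof (cases "sink s Z ?u")
    case True
    then show ?thesis by (simp add: nxt_sink)
  next
    case False
    then have "(?u, nxt ?u) \<in> uadj s t Z"
      using out_edge_in[OF False] nxt_not_sink[OF False] uadj_edge by metis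
    then show ?thesis by simp
  qed
  with Suc show ?case by (simp add: rtrancl_trans)
qed simp

lemma component_eq:
  assumes x: "x \<in> V"
  shows "{y\<in>V. (x, y) \<in> (uadj s t Z)\<^sup>*} = {y\<in>V. root y = root x}"
proof (intro equalityI subsetI)
  fix y assume "y \<in> {y\<in>V. (x, y) \<in> (uadj s t Z)\<^sup>*}"
  then show "y \<in> {y\<in>V. root y = root x}" using rtrancl_uadj_root[OF x, of y] by simp
next
  fix y assume "y \<in> {y\<in>V. root y = root x}"
  then have y: "y \<in> V" and r: "root y = root x" by auto
  have "(x, root x) \<in> (uadj s t Z)\<^sup>*"
    unfolding forest_root_def by (rule rtrancl_uadj_nxt_pow)
  moreover have "(root y, y) \<in> (uadj s t Z)\<^sup>*"
    unfolding forest_root_def by (rule uadj_rtrancl_sym[OF rtrancl_uadj_nxt_pow])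
  ultimately have "(x, y) \<in> (uadj s t Z)\<^sup>*" unfolding r by (rule rtrancl_trans)
  then show "y \<in> {y\<in>V. (x, y) \<in> (uadj s t Z)\<^sup>*}" using y by simp
qed

lemma comps_eq: "comps V s t Z = (\<lambda>r. {y\<in>V. root y = r}) ` {v\<in>V. sink s Z v}"
proof (intro equalityI subsetI)
  fix C assume "C \<in> comps V s t Z"
  then obtain x where x: "x \<in> V" and C: "C = {y\<in>V. (x, y) \<in> (uadj s t Z)\<^sup>*}"
    unfolding comps_def by auto
  then have "C = {y\<in>V. root y = root x}" using component_eq by simp
  moreover have "root x \<in> {v\<in>V. sink s Z v}" using root_sink root_in x by simp
  ultimately show "C \<in> (\<lambda>r. {y\<in>V. root y = r}) ` {v\<in>V. sink s Z v}" by blast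
next
  fix C assume "C \<in> (\<lambda>r. {y\<in>V. root y = r}) ` {v\<in>V. sink s Z v}"
  then obtain r where r: "r \<in> V" "sink s Z r" and C: "C = {y\<in>V. root y = r}" by auto
  have "C = {y\<in>V. (r, y) \<in> (uadj s t Z)\<^sup>*}" using component_eq[OF r(1)] root_of_sink[OF r(2)] C by simp
  then show "C \<in> comps V s t Z" unfolding comps_def using r by auto
qed

lemma card_comps: "card (comps V s t Z) = card {v\<in>V. sink s Z v}"
proof -
  have "inj_on (\<lambda>r. {y\<in>V. root y = r}) {v\<in>V. sink s Z v}"
    by (rule inj_onI) (metis (mono_tags, lifting) mem_Collect_eq root_of_sink)
  then show ?thesis unfolding comps_eq by (rule card_image)
qed

text \<open>On an undirected cycle, the node of maximal height would need two out-edges.\<close>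
lemma uacyclic: "uacyclic s t Z"
  unfolding uacyclic_def
proof
  assume "\<exists>es vs. ucycle s t Z es vs"
  then obtain es vs where "ucycle s t Z es vs" by blast
  define L where "L = length es"
  from \<open>ucycle s t Z es vs\<close> have L0: "L > 0" and de: "distinct es" and sub: "set es \<subseteq> Z"
    and ends: "\<forall>i<L. {s (es!i), t (es!i)} = {vs!i, vs!((i+1) mod L)}"
    unfolding ucycle_def L_def by auto
  have esZ: "es!i \<in> Z" if "i < L" for i using sub that L_def by auto
  let ?H = "(\<lambda>i. height (vs!i)) ` {..<L}"
  have "Max ?H \<in> ?H" using L0 by (intro Max_in) auto
  then obtain j where j: "j < L" and "height (vs!j) = Max ?H" by auto
  then have jmax: "height (vs!i) \<le> height (vs!j)" if "i < L" for i using that by simp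
  have source_top: "s (es!i) = vs!j" if i: "i < L" and vj: "vs!j \<in> {vs!i, vs!((i+1) mod L)}" for i
  proof (rule ccontr)
    assume ns: "s (es!i) \<noteq> vs!j"
    have ei: "{s (es!i), t (es!i)} = {vs!i, vs!((i+1) mod L)}" using ends i by simp
    then have "vs!j \<in> {s (es!i), t (es!i)}" using vj by simp
    then have "t (es!i) = vs!j" using ns by auto
    then have "height (s (es!i)) = Suc (height (vs!j))" using height_edge[OF esZ[OF i]] by simp
    moreover have "s (es!i) = vs!i \<or> s (es!i) = vs!((i+1) mod L)" using ei by blast
    then have "height (s (es!i)) \<le> height (vs!j)" using jmax i L0 by auto
    ultimately show False by simp
  qed
  define i' where "i' = (if j = 0 then L - 1 else j - 1)"
  have i'L: "i' < L" and i'j: "(i' + 1) mod L = j" using j L0 by (auto simp: i'_def)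
  have "es!j = es!i'"
    using out_edge_unique[OF esZ[OF j] esZ[OF i'L]] source_top[OF j] source_top[OF i'L] i'j by simp
  then have "j = i'" using de j i'L L_def by (simp add: nth_eq_iff_index_eq)
  then have "L = 1" using j L0 by (auto simp: i'_def split: if_splits)
  then have "s (es!0) = t (es!0)" using ends by auto
  then show False using no_loop esZ L0 by blast
qed

lemma sink_component: "v \<in> V \<Longrightarrow> sink s Z v \<Longrightarrow> {y\<in>V. root y = v} \<in> comps V s t Z"
  using comps_eq by blast

lemma Theta_imp_sinks_roots:
  assumes Th: "Z \<in> Theta V E s t F B" and finB: "finite B"
  shows "{v\<in>V. sink s Z v} = B" and "\<forall>r\<in>B. \<exists>f\<in>F. root f = r"
proof -
  from Th have card_B: "card (comps V s t Z) = card B"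
    and comps_ok: "\<forall>C\<in>comps V s t Z. C \<inter> F \<noteq> {} \<and> (\<exists>r\<in>B \<inter> C. {v\<in>C. \<not> (\<exists>e\<in>Z. s e = v)} = {r})"
    unfolding Theta_def by auto
  have "{v\<in>V. sink s Z v} \<subseteq> B"
  proof
    fix v assume "v \<in> {v\<in>V. sink s Z v}"
    then have v: "v \<in> V" "sink s Z v" by auto
    let ?C = "{y\<in>V. root y = v}"
    have "\<exists>r\<in>B \<inter> ?C. {u\<in>?C. \<not> (\<exists>e\<in>Z. s e = u)} = {r}"
      using bspec[OF comps_ok sink_component[OF v]] by (rule conjunct2)
    then obtain r where "r \<in> B" "{u\<in>?C. \<not> (\<exists>e\<in>Z. s e = u)} = {r}" by blast
    moreover have "v \<in> {u\<in>?C. \<not> (\<exists>e\<in>Z. s e = u)}"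
      using v root_of_sink[OF v(2)] unfolding sink_def by simp
    ultimately show "v \<in> B" by simp
  qed
  then show sinks: "{v\<in>V. sink s Z v} = B"
    using card_subset_eq[OF finB] card_B card_comps by simp
  show "\<forall>r\<in>B. \<exists>f\<in>F. root f = r"
  proof
    fix r assume "r \<in> B"
    then have r: "r \<in> V" "sink s Z r" using sinks by auto
    have "{y\<in>V. root y = r} \<inter> F \<noteq> {}"
      using bspec[OF comps_ok sink_component[OF r]] by (rule conjunct1)
    then show "\<exists>f\<in>F. root f = r" by blast
  qed
qed

lemma sinks_roots_imp_Theta:
  assumes ZE: "Z \<subseteq> E" and FV: "F \<subseteq> V"
    and sinks: "{v\<in>V. sink s Z v} = B" and rooted: "\<forall>r\<in>B. \<exists>f\<in>F. root f = r"
  shows "Z \<in> Theta V E s t F B"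
proof -
  have comps_ok: "C \<inter> F \<noteq> {} \<and> (\<exists>r\<in>B \<inter> C. {v\<in>C. \<not> (\<exists>e\<in>Z. s e = v)} = {r})"
    if "C \<in> comps V s t Z" for C
  proof -
    from that obtain r where r: "r \<in> V" "sink s Z r" and C: "C = {y\<in>V. root y = r}"
      unfolding comps_eq by auto
    have rB: "r \<in> B" using sinks r by auto
    then obtain f where "f \<in> F" "root f = r" using rooted by auto
    then have "C \<inter> F \<noteq> {}" using FV C by auto
    moreover have "{v\<in>C. \<not> (\<exists>e\<in>Z. s e = v)} = {r}"
    proof (intro equalityI subsetI)
      fix v assume "v \<in> {v\<in>C. \<not> (\<exists>e\<in>Z. s e = v)}"
      then have "v \<in> C" "sink s Z v" unfolding sink_def by auto
      then show "v \<in> {r}" using C root_of_sink by auto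
    next
      fix v assume "v \<in> {r}"
      then show "v \<in> {v\<in>C. \<not> (\<exists>e\<in>Z. s e = v)}"
        using r C root_of_sink unfolding sink_def by auto
    qed
    moreover have "r \<in> C" using r C root_of_sink by auto
    ultimately show ?thesis using rB by blast
  qed
  have "card (comps V s t Z) = card B" using card_comps sinks by simp
  with ZE uacyclic comps_ok show ?thesis
    unfolding Theta_def by blast
qed

lemma root_path_edges_subset: "root_path_edges s t Z v \<subseteq> Z"
  using root_path_step unfolding root_path_edges_def root_path_def by auto

lemma root_in_closed:
  assumes closed: "\<forall>e\<in>Z. s e \<in> N \<longrightarrow> t e \<in> N" and v: "v \<in> N"
  shows "root v \<in> N"
proof -
  have "(nxt ^^ n) v \<in> N" for n
  proof (induction n)
    case (Suc n)
    then show ?case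
      using closed out_edge_in[of "(nxt ^^ n) v"] nxt_not_sink nxt_sink
      by (cases "sink s Z ((nxt ^^ n) v)") auto
  qed (simp add: v)
  then show ?thesis unfolding forest_root_def by simp
qed

text \<open>The hypothesis \<open>star\<close> is condition (*) for the start node \<open>x\<close>, with \<open>N = \<E>\<^sup>-\<close>.\<close>
lemma root_path_edges_avoid:
  assumes ZE: "Z \<subseteq> E" and V: "V = {1..M+1}" and x: "x \<in> V"
    and separated: "root x \<noteq> root (M+1)"
    and star: "\<forall>l'\<in>{1..M}. \<forall>es. dpath s t E x l' es \<and> (\<exists>e\<in>set es. e \<in> N)
                 \<longrightarrow> M + 1 \<in> set (x # map t es)"
  shows "root_path_edges s t Z x \<inter> N = {}"
proof (rule ccontr)
  assume "root_path_edges s t Z x \<inter> N \<noteq> {}"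
  then obtain n where n: "n < height x" and neg: "out_edge s Z ((nxt ^^ n) x) \<in> N"
    unfolding root_path_edges_def root_path_def by auto
  let ?es = "root_path s t Z x (Suc n)"
  have not_top: "(nxt ^^ p) x \<noteq> M + 1" for p
    using root_nxt_pow[OF x, of p] separated by metis
  have "(nxt ^^ Suc n) x \<in> {1..M}"
    using nxt_pow_in[OF x, of "Suc n"] not_top[of "Suc n"] V by auto
  moreover have "dpath s t E x ((nxt ^^ Suc n) x) ?es"
    using root_path_dpath[OF x _ ZE, of "Suc n"] n by (simp del: funpow.simps)
  moreover have "\<exists>e\<in>set ?es. e \<in> N"
    using neg unfolding root_path_def by auto
  ultimately have "M + 1 \<in> set (x # map t ?es)" using star by blast
  also have "x # map t ?es = map (\<lambda>p. (nxt ^^ p) x) [0..<Suc (Suc n)]"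
    using root_path_nodes[of "Suc n" x] n by (simp del: upt_Suc)
  finally have "M + 1 \<in> (\<lambda>p. (nxt ^^ p) x) ` {0..<Suc (Suc n)}" by (simp only: set_map set_upt)
  then obtain p where "M + 1 = (nxt ^^ p) x" by blast
  then show False using not_top[of p] by simp
qed

end

lemma Theta_functional_forest:
  assumes Th: "Z \<in> Theta V E s t F B" and finV: "finite V"
    and edges: "\<forall>e\<in>E. s e \<in> V \<and> t e \<in> V \<and> s e \<noteq> t e"
  shows "functional_forest V s t Z"
proof
  from Th have ZE: "Z \<subseteq> E" and uac: "uacyclic s t Z" unfolding Theta_def by auto
  show "finite V" by (rule finV)
  show "s e \<in> V \<and> t e \<in> V" "s e \<noteq> t e" if "e \<in> Z" for e using that ZE edges by auto
  show "e1 = e2" if "e1 \<in> Z" "e2 \<in> Z" "s e1 = s e2" for e1 e2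
    using Theta_out_edge_unique[OF Th finV] that ZE edges by blast
  show "\<not> dcycle s t Z es" for es using uac by (rule uacyclic_no_dcycle)
qed

lemma root_path_transfer:
  assumes ff: "functional_forest V s t Z" and ff': "functional_forest V s t Z'"
    and sinks: "\<forall>v. sink s Z' v = sink s Z v"
    and x: "x \<in> V" and path: "root_path_edges s t Z x \<subseteq> Z'"
  shows "forest_root s t Z' x = forest_root s t Z x"
    and "root_path_edges s t Z' x = root_path_edges s t Z x"
proof -
  interpret Z: functional_forest V s t Z by (rule ff)
  interpret Z': functional_forest V s t Z' by (rule ff')
  have step: "out_edge s Z' ((Z.nxt ^^ n) x) = out_edge s Z ((Z.nxt ^^ n) x)"
    if "n < Z.height x" for n
    using Z.root_path_step[OF that] Z'.out_edge_eq path that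
    unfolding root_path_edges_def root_path_def by force
  have same_nodes: "(Z'.nxt ^^ n) x = (Z.nxt ^^ n) x" if "n \<le> Z.height x" for n
    using that
  proof (induction n)
    case (Suc n)
    then have "\<not> sink s Z ((Z.nxt ^^ n) x)" using Z.not_sink_below_height by simp
    then show ?case
      using Suc step[of n] sinks Z.nxt_not_sink Z'.nxt_not_sink by simp
  qed simp
  have height: "Z'.height x = Z.height x"
  proof (rule Z'.height_eqI)
    show "sink s Z' ((Z'.nxt ^^ Z.height x) x)"
      using same_nodes[of "Z.height x"] Z.root_sink[OF x] sinks unfolding forest_root_def by simp
    show "\<forall>p<Z.height x. \<not> sink s Z' ((Z'.nxt ^^ p) x)"
      using same_nodes Z.not_sink_below_height sinks by simp
  qed
  show "forest_root s t Z' x = forest_root s t Z x"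
    using same_nodes height unfolding forest_root_def by simp
  show "root_path_edges s t Z' x = root_path_edges s t Z x"
    using same_nodes step height unfolding root_path_edges_def root_path_def by simp
qed

lemma msum_split: "msum mm d = mm 0 + (\<Sum>j\<in>{1..d}. mm j)"
  unfolding msum_def by (simp add: sum.atLeast_Suc_atMost)

lemma Nblk_inner: "i \<in> {1..d} \<Longrightarrow> Nblk mm d i = {1 + (\<Sum>j\<in>{1..<i}. mm j) .. (\<Sum>j\<in>{1..i}. mm j)}"
  unfolding Nblk_def by auto

lemma Nblk_inner_subset: "i \<in> {1..d} \<Longrightarrow> Nblk mm d i \<subseteq> {1..(\<Sum>j\<in>{1..d}. mm j)}"
proof -
  assume i: "i \<in> {1..d}"
  have "(\<Sum>j\<in>{1..i}. mm j) \<le> (\<Sum>j\<in>{1..d}. mm j)" by (rule sum_mono2) (use i in auto)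
  then show ?thesis using Nblk_inner[OF i] by auto
qed

lemma Nblk_zero: "Nblk mm d 0 = {(\<Sum>j\<in>{1..d}. mm j) + 1 .. msum mm d + 1}"
  unfolding Nblk_def using msum_split[of mm d] by simp

lemma Nblk_last: "Nblk mm d (d + 1) = {msum mm d + 1}"
  unfolding Nblk_def by simp

lemma Nblk_inner_disjoint:
  assumes "i \<in> {1..d}" "i' \<in> {1..d}" "i < i'"
  shows "Nblk mm d i \<inter> Nblk mm d i' = {}"
proof -
  have "(\<Sum>j\<in>{1..i}. mm j) \<le> (\<Sum>j\<in>{1..<i'}. mm j)" by (rule sum_mono2) (use assms in auto)
  then show ?thesis using Nblk_inner[OF assms(1)] Nblk_inner[OF assms(2)] by auto
qed

lemma Nblk_disjoint:
  assumes "i \<in> {1..d+1}" "i' \<in> {1..d+1}" "i \<noteq> i'"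
  shows "Nblk mm d i \<inter> Nblk mm d i' = {}"
proof -
  have inner_last: "Nblk mm d j \<inter> Nblk mm d (d + 1) = {}" if "j \<in> {1..d}" for j
    using Nblk_inner_subset[OF that, of mm] msum_split[of mm d] unfolding Nblk_last by auto
  show ?thesis
  proof (cases "i = d + 1 \<or> i' = d + 1")
    case True
    then show ?thesis using assms inner_last[of i] inner_last[of i'] by auto
  next
    case False
    then have "i \<in> {1..d}" "i' \<in> {1..d}" using assms by auto
    then show ?thesis
      using Nblk_inner_disjoint[of i d i' mm] Nblk_inner_disjoint[of i' d i mm] assms(3)
      by (cases "i < i'") auto
  qed
qed

lemma Nblk_inner_zero_disjoint: "i \<in> {1..d} \<Longrightarrow> Nblk mm d i \<inter> Nblk mm d 0 = {}"
  using Nblk_inner_subset[of i d mm] Nblk_zero[of mm d] by auto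

lemma Nblk_cover:
  assumes y: "y \<in> {1..msum mm d + 1}"
  shows "y \<in> Nblk mm d 0 \<or> (\<exists>j\<in>{1..d}. y \<in> Nblk mm d j)"
proof (cases "y \<le> (\<Sum>j\<in>{1..d}. mm j)")
  case False
  then show ?thesis using y Nblk_zero[of mm d] by auto
next
  case True
  define j where "j = (LEAST j. y \<le> (\<Sum>i\<in>{1..j}. mm i))"
  have yj: "y \<le> (\<Sum>i\<in>{1..j}. mm i)" unfolding j_def using True by (rule LeastI)
  have jd: "j \<le> d" unfolding j_def using True by (rule Least_le)
  have "j \<noteq> 0"
  proof
    assume "j = 0"
    then show False using yj y by simp
  qed
  then obtain j' where j': "j = Suc j'" by (cases j) auto
  then have "\<not> y \<le> (\<Sum>i\<in>{1..j'}. mm i)" unfolding j_def by (metis lessI not_less_Least)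
  moreover have "{1..<j} = {1..j'}" using j' by auto
  ultimately have "y \<in> Nblk mm d j" using Nblk_inner[of j d mm] yj jd j' by auto
  then show ?thesis using jd j' by auto
qed

lemma card_Bk:
  assumes k: "k \<in> {1..d+1}" and Bt: "Bt \<in> Bk mm d k"
  shows "finite Bt" and "card Bt = d"
proof -
  obtain w where Bt: "Bt = w ` ({1..d+1} - {k})" and w: "\<forall>j\<in>{1..d+1} - {k}. w j \<in> Nblk mm d j"
    using Bt unfolding Bk_def by blast
  have "inj_on w ({1..d+1} - {k})"
  proof (rule inj_onI)
    fix a a' assume a: "a \<in> {1..d+1} - {k}" and a': "a' \<in> {1..d+1} - {k}" and eq: "w a = w a'"
    have "w a \<in> Nblk mm d a" using w a by blast
    moreover have "w a \<in> Nblk mm d a'" unfolding eq using w a' by blast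
    ultimately show "a = a'" using Nblk_disjoint[of a d a' mm] a a' by blast
  qed
  then show "card Bt = d" unfolding Bt using k by (simp add: card_image)
  show "finite Bt" unfolding Bt by simp
qed

lemma Bk_top_node:
  assumes "k \<noteq> d + 1" and "Bt \<in> Bk mm d k"
  shows "msum mm d + 1 \<in> Bt"
proof -
  obtain w where Bt: "Bt = w ` ({1..d+1} - {k})" and w: "\<forall>j\<in>{1..d+1} - {k}. w j \<in> Nblk mm d j"
    using assms(2) unfolding Bk_def by blast
  have "d + 1 \<in> {1..d+1} - {k}" using assms(1) by simp
  then have "w (d + 1) \<in> Bt" and "w (d + 1) \<in> Nblk mm d (d + 1)" using w unfolding Bt by auto
  then show ?thesis unfolding Nblk_def by simp
qed

lemma Bk_last_Nblk_zero:
  assumes "Bt \<in> Bk mm d (d + 1)"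
  shows "Bt \<inter> Nblk mm d 0 = {}"
proof -
  have idx: "{1..d+1} - {d+1} = {1..d}" by auto
  obtain w where Bt: "Bt = w ` {1..d}" and w: "\<forall>j\<in>{1..d}. w j \<in> Nblk mm d j"
    using assms unfolding Bk_def idx by blast
  show ?thesis unfolding Bt using w Nblk_inner_zero_disjoint by blast
qed

lemma A_compatible_Nblk_zero_closed:
  assumes compat: "A_compatible mm d A b jj E s t \<pi>"
    and e: "e \<in> E" "s e \<in> Nblk mm d 0" and te: "t e \<in> {1..msum mm d + 1}"
  shows "t e \<in> Nblk mm d 0"
proof (rule ccontr)
  assume "t e \<notin> Nblk mm d 0"
  then obtain j where "j \<in> {1..d}" "t e \<in> Nblk mm d j" using Nblk_cover[OF te] by blast
  moreover have "\<forall>e\<in>E. \<forall>i\<in>{0..d}. \<forall>j\<in>{1..d}. i \<noteq> j \<longrightarrow>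
      \<not> (s e \<in> Nblk mm d i \<and> t e \<in> Nblk mm d j)"
    using compat unfolding A_compatible_def by (rule conjunct1)
  ultimately show False using e by (metis atLeastAtMost_iff atLeastAtMost_iff le0 not_one_le_zero)
qed

section \<open>Exchanging edges along \<open>\<mu>\<close>\<close>

lemma P_graph_muD:
  assumes "P_graph E s t \<pi> \<mu>" "e \<in> Eneg E \<pi>"
  shows "\<forall>e'\<in>\<mu> e. s e' = s e" and "\<forall>e2\<in>Eneg E \<pi>. e2 \<noteq> e \<longrightarrow> \<mu> e \<inter> \<mu> e2 = {}"
  using assms unfolding P_graph_def by blast+

lemma P_graph_dcycleD:
  assumes "P_graph E s t \<pi> \<mu>" "dcycle s t E es"
  shows "card {i. i < length es \<and> es!i \<in> Eneg E \<pi>} \<le> 1"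
  using assms unfolding P_graph_def by blast

lemma mu_star_Eneg_source:
  assumes Pg: "P_graph E s t \<pi> \<mu>" and x: "x \<in> im_mu E \<pi> \<mu>"
  shows "mu_star E \<pi> \<mu> x \<in> Eneg E \<pi>" and "s (mu_star E \<pi> \<mu> x) = s x"
proof -
  from x obtain e where e: "e \<in> Eneg E \<pi>" "x \<in> \<mu> e" unfolding im_mu_def by auto
  have "mu_star E \<pi> \<mu> x = e"
    unfolding mu_star_def using P_graph_muD(2)[OF Pg] e by (intro the_equality) blast+
  then show "mu_star E \<pi> \<mu> x \<in> Eneg E \<pi>" "s (mu_star E \<pi> \<mu> x) = s x"
    using P_graph_muD(1)[OF Pg e(1)] e by auto
qed

text \<open>The edge set \<open>(\<zeta> \<setminus> X) \<union> \<mu>\<^sup>*(X)\<close> in the definition of \<open>\<E>\<^sup>F\<^sub>\<zeta>\<close>.\<close>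
definition mu_exchange :: "'e set \<Rightarrow> ('e \<Rightarrow> 'a::ordered_comm_ring) \<Rightarrow> ('e \<Rightarrow> 'e set) \<Rightarrow> 'e set \<Rightarrow> 'e set \<Rightarrow> 'e set" where
  "mu_exchange E \<pi> \<mu> Z X = (Z - X) \<union> mu_star E \<pi> \<mu> ` X"

context
  fixes E :: "'e set" and s t :: "'e \<Rightarrow> nat" and \<pi> :: "'e \<Rightarrow> 'a::ordered_comm_ring" and \<mu>
  assumes Pg: "P_graph E s t \<pi> \<mu>"
begin

lemma mu_exchange_subset: "Z \<subseteq> E \<Longrightarrow> X \<subseteq> im_mu E \<pi> \<mu> \<Longrightarrow> mu_exchange E \<pi> \<mu> Z X \<subseteq> E"
  using mu_star_Eneg_source(1)[OF Pg] unfolding mu_exchange_def Eneg_def by blast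

lemma mu_exchange_nonneg_edge:
  "e \<in> mu_exchange E \<pi> \<mu> Z X \<Longrightarrow> e \<notin> Eneg E \<pi> \<Longrightarrow> X \<subseteq> im_mu E \<pi> \<mu> \<Longrightarrow> e \<in> Z - X"
  using mu_star_Eneg_source(1)[OF Pg] unfolding mu_exchange_def by blast

lemma sink_mu_exchange:
  assumes X: "X \<subseteq> Z \<inter> im_mu E \<pi> \<mu>"
  shows "sink s (mu_exchange E \<pi> \<mu> Z X) v = sink s Z v"
proof -
  have "(\<exists>e\<in>mu_exchange E \<pi> \<mu> Z X. s e = v) \<longleftrightarrow> (\<exists>e\<in>Z. s e = v)"
  proof
    assume "\<exists>e\<in>mu_exchange E \<pi> \<mu> Z X. s e = v"
    then show "\<exists>e\<in>Z. s e = v"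
      using X mu_star_Eneg_source(2)[OF Pg] unfolding mu_exchange_def by fastforce
  next
    assume "\<exists>e\<in>Z. s e = v"
    then obtain e where e: "e \<in> Z" "s e = v" by blast
    show "\<exists>e\<in>mu_exchange E \<pi> \<mu> Z X. s e = v"
    proof (cases "e \<in> X")
      case True
      then have "mu_star E \<pi> \<mu> e \<in> mu_exchange E \<pi> \<mu> Z X" unfolding mu_exchange_def by blast
      moreover have "s (mu_star E \<pi> \<mu> e) = v" using mu_star_Eneg_source(2)[OF Pg] X True e by blast
      ultimately show ?thesis by blast
    next
      case False
      then show ?thesis using e unfolding mu_exchange_def by blast
    qed
  qed
  then show ?thesis unfolding sink_def by simp
qed

lemma mu_exchange_out_edge_unique:
  assumes X: "X \<subseteq> Z \<inter> im_mu E \<pi> \<mu>"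
    and unique: "\<And>e1 e2. e1 \<in> Z \<Longrightarrow> e2 \<in> Z \<Longrightarrow> s e1 = s e2 \<Longrightarrow> e1 = e2"
    and e: "e1 \<in> mu_exchange E \<pi> \<mu> Z X" "e2 \<in> mu_exchange E \<pi> \<mu> Z X" "s e1 = s e2"
  shows "e1 = e2"
proof -
  have replaced: "\<exists>y\<in>Z. s y = s e \<and> (y \<notin> X \<and> e = y \<or> y \<in> X \<and> e = mu_star E \<pi> \<mu> y)"
    if e: "e \<in> mu_exchange E \<pi> \<mu> Z X" for e
  proof (cases "e \<in> Z - X")
    case True
    then show ?thesis by blast
  next
    case False
    then obtain y where "y \<in> X" "e = mu_star E \<pi> \<mu> y"
      using e unfolding mu_exchange_def by blast
    then show ?thesis using X mu_star_Eneg_source(2)[OF Pg, of y] by (intro bexI[of _ y]) auto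
  qed
  obtain y1 where y1: "y1 \<in> Z" "s y1 = s e1" "y1 \<notin> X \<and> e1 = y1 \<or> y1 \<in> X \<and> e1 = mu_star E \<pi> \<mu> y1"
    using replaced[OF e(1)] by blast
  obtain y2 where y2: "y2 \<in> Z" "s y2 = s e2" "y2 \<notin> X \<and> e2 = y2 \<or> y2 \<in> X \<and> e2 = mu_star E \<pi> \<mu> y2"
    using replaced[OF e(2)] by blast
  have "y1 = y2" using unique[OF y1(1) y2(1)] y1(2) y2(2) e(3) by simp
  then show ?thesis using y1(3) y2(3) by auto
qed

lemma mu_exchange_Un_new_edge:
  assumes "Xi \<union> Xj \<subseteq> im_mu E \<pi> \<mu>"
    and "a \<in> mu_exchange E \<pi> \<mu> Z (Xi \<union> Xj)" and "a \<notin> mu_exchange E \<pi> \<mu> Z Xi"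
  shows "a \<in> Eneg E \<pi>" and "a \<in> mu_exchange E \<pi> \<mu> Z Xj"
proof -
  from assms(2,3) obtain x where x: "x \<in> Xj" "a = mu_star E \<pi> \<mu> x"
    unfolding mu_exchange_def by blast
  then show "a \<in> Eneg E \<pi>" using mu_star_Eneg_source(1)[OF Pg] assms(1) by blast
  show "a \<in> mu_exchange E \<pi> \<mu> Z Xj" using x unfolding mu_exchange_def by blast
qed

lemma mu_exchange_Un_no_dcycle:
  assumes ZE: "Z \<subseteq> E" and X: "X1 \<union> X2 \<subseteq> im_mu E \<pi> \<mu>"
    and acyclic1: "\<And>es. \<not> dcycle s t (mu_exchange E \<pi> \<mu> Z X1) es"
    and acyclic2: "\<And>es. \<not> dcycle s t (mu_exchange E \<pi> \<mu> Z X2) es"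
  shows "\<not> dcycle s t (mu_exchange E \<pi> \<mu> Z (X1 \<union> X2)) es"
proof
  let ?ZU = "mu_exchange E \<pi> \<mu> Z (X1 \<union> X2)"
  assume dc: "dcycle s t ?ZU es"
  then have esU: "set es \<subseteq> ?ZU" unfolding dcycle_def by simp
  obtain a where a: "a \<in> set es" "a \<notin> mu_exchange E \<pi> \<mu> Z X1"
    using dcycle_mono[OF dc] acyclic1 by blast
  obtain b where b: "b \<in> set es" "b \<notin> mu_exchange E \<pi> \<mu> Z X2"
    using dcycle_mono[OF dc] acyclic2 by blast
  have X': "X2 \<union> X1 \<subseteq> im_mu E \<pi> \<mu>" and ZU': "?ZU = mu_exchange E \<pi> \<mu> Z (X2 \<union> X1)"
    using X by (auto simp: Un_commute)
  have "a \<in> Eneg E \<pi>" "a \<in> mu_exchange E \<pi> \<mu> Z X2"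
    using mu_exchange_Un_new_edge[OF X _ a(2)] a(1) esU by blast+
  moreover have "b \<in> Eneg E \<pi>"
    using mu_exchange_Un_new_edge(1)[OF X' _ b(2)] b(1) esU ZU' by blast
  ultimately have ab: "a \<in> Eneg E \<pi>" "b \<in> Eneg E \<pi>" "a \<noteq> b" using b(2) by auto
  obtain ia ib where "ia < length es" "es!ia = a" "ib < length es" "es!ib = b"
    using a(1) b(1) by (auto simp: in_set_conv_nth)
  then have "{ia, ib} \<subseteq> {i. i < length es \<and> es!i \<in> Eneg E \<pi>}" and "ia \<noteq> ib"
    using ab by auto
  then have "2 \<le> card {i. i < length es \<and> es!i \<in> Eneg E \<pi>}"
    using card_mono[of "{i. i < length es \<and> es!i \<in> Eneg E \<pi>}" "{ia, ib}"] by simp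
  moreover have "dcycle s t E es"
    using dc esU mu_exchange_subset[OF ZE] X by (blast intro: dcycle_mono)
  ultimately show False using P_graph_dcycleD[OF Pg] by fastforce
qed

lemma mu_exchange_functional_forest:
  assumes ff: "functional_forest V s t Z" and ZE: "Z \<subseteq> E" and X: "X \<subseteq> Z \<inter> im_mu E \<pi> \<mu>"
    and edges: "\<forall>e\<in>E. s e \<in> V \<and> t e \<in> V \<and> s e \<noteq> t e"
    and acyclic: "\<And>es. \<not> dcycle s t (mu_exchange E \<pi> \<mu> Z X) es"
  shows "functional_forest V s t (mu_exchange E \<pi> \<mu> Z X)"
proof
  interpret functional_forest V s t Z by (rule ff)
  have sub: "mu_exchange E \<pi> \<mu> Z X \<subseteq> E" using mu_exchange_subset ZE X by blast
  show "finite V" by (rule finite_nodes)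
  show "s e \<in> V \<and> t e \<in> V" "s e \<noteq> t e" if "e \<in> mu_exchange E \<pi> \<mu> Z X" for e
    using that sub edges by auto
  show "e1 = e2" if "e1 \<in> mu_exchange E \<pi> \<mu> Z X" "e2 \<in> mu_exchange E \<pi> \<mu> Z X" "s e1 = s e2"
    for e1 e2 using mu_exchange_out_edge_unique[OF X out_edge_unique that] .
  show "\<not> dcycle s t (mu_exchange E \<pi> \<mu> Z X) es" for es by (rule acyclic)
qed

text \<open>A root path that uses no negative edge of an exchanged forest already lies in \<open>Z \<setminus> X\<close>,
  so it is the root path of \<open>Z\<close> as well.\<close>
lemma root_path_mu_exchange:
  assumes ff: "functional_forest V s t Z"
    and ff': "functional_forest V s t (mu_exchange E \<pi> \<mu> Z X)"
    and X: "X \<subseteq> Z \<inter> im_mu E \<pi> \<mu>" and x: "x \<in> V"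
    and nonneg: "root_path_edges s t (mu_exchange E \<pi> \<mu> Z X) x \<inter> Eneg E \<pi> = {}"
  shows "root_path_edges s t Z x \<inter> X = {}"
proof -
  let ?Z' = "mu_exchange E \<pi> \<mu> Z X"
  have path: "root_path_edges s t ?Z' x \<subseteq> Z - X"
    using functional_forest.root_path_edges_subset[OF ff'] nonneg mu_exchange_nonneg_edge X by blast
  have "root_path_edges s t Z x = root_path_edges s t ?Z' x"
    using root_path_transfer(2)[OF ff' ff _ x] path sink_mu_exchange[OF X] by blast
  then show ?thesis using path by blast
qed

end

section \<open>Closure under union\<close>

lemma card_roots_distinct:
  assumes rooted: "\<forall>r\<in>B. \<exists>f\<in>F. R f = r" and F: "F = g ` {1..d} \<union> {y}"
    and card_B: "card B = d + 1" and i: "i \<in> {1..d}"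
  shows "R (g i) \<noteq> R y"
proof
  assume eq: "R (g i) = R y"
  have "B \<subseteq> R ` F" using rooted by force
  also have "R ` F \<subseteq> (R \<circ> g) ` ({1..d} - {i}) \<union> {R y}" using eq unfolding F by auto
  finally have "card B \<le> card ((R \<circ> g) ` ({1..d} - {i}) \<union> {R y})" by (rule card_mono[rotated]) simp
  also have "\<dots> \<le> card ((R \<circ> g) ` ({1..d} - {i})) + 1" using card_Un_le[of _ "{R y}"] by simp
  also have "\<dots> \<le> card ({1..d} - {i}) + 1" using card_image_le[of "{1..d} - {i}" "R \<circ> g"] by simp
  also have "\<dots> = d" using i by simp
  finally show False using card_B by simp
qed

locale compatible_P_graph =
  fixes mm :: "nat \<Rightarrow> nat" and d :: nat
    and A :: "nat \<Rightarrow> nat \<Rightarrow> 'a::ordered_comm_ring" and b :: "nat \<Rightarrow> 'a"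
    and jj :: "nat \<Rightarrow> nat"
    and E :: "'e set" and s t :: "'e \<Rightarrow> nat" and \<pi> :: "'e \<Rightarrow> 'a" and \<mu> :: "'e \<Rightarrow> 'e set"
    and k lB :: nat and Bt :: "nat set"
  assumes blocks: "block_structure mm d A b jj"
    and graph: "multidigraph (msum mm d + 1) E s t"
    and compat: "A_compatible mm d A b jj E s t \<pi>"
    and Pg: "P_graph E s t \<pi> \<mu>"
    and star: "\<forall>l'\<in>{1..msum mm d}. \<forall>i\<in>{1..d}. \<forall>es. dpath s t E (jj i) l' es
                 \<and> (\<exists>e\<in>set es. e \<in> Eneg E \<pi>) \<longrightarrow> msum mm d + 1 \<in> set (jj i # map t es)"
    and k: "k \<in> {1..d+1}"
    and Bt: "Bt \<in> Bk mm d k"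
    and lB_mem: "lB \<in> {1..msum mm d + 1} - Bt"
begin

abbreviation "m \<equiv> msum mm d"
abbreviation "V \<equiv> {1..m + 1}"
abbreviation "F \<equiv> Fset mm d jj"
abbreviation "B \<equiv> Bt \<union> {lB}"
abbreviation "exchange \<equiv> mu_exchange E \<pi> \<mu>"

lemma edges_in_V: "\<forall>e\<in>E. s e \<in> V \<and> t e \<in> V \<and> s e \<noteq> t e"
  using graph unfolding multidigraph_def by auto

lemma jj_mem:
  assumes i: "i \<in> {1..d}"
  shows "jj i \<in> V \<and> jj i \<noteq> m + 1"
proof -
  have "jj i \<in> Nblk mm d i" using blocks i unfolding block_structure_def by blast
  then have "jj i \<in> {1..(\<Sum>j\<in>{1..d}. mm j)}" using Nblk_inner_subset[OF i] by blast
  then show ?thesis using msum_split[of mm d] by auto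
qed

lemma F_eq: "F = jj ` {1..d} \<union> {m + 1}"
  unfolding Fset_def ..

lemma F_subset: "F \<subseteq> V"
  using jj_mem unfolding F_eq by auto

lemma finite_B: "finite B"
  using card_Bk(1)[OF k Bt] by simp

lemma card_B: "card B = d + 1"
  using card_Bk[OF k Bt] lB_mem by simp

lemma Theta_forest: "Z \<in> Theta V E s t F B \<Longrightarrow> functional_forest V s t Z"
  using Theta_functional_forest edges_in_V by blast

lemma Theta_sinks_roots:
  assumes "Z \<in> Theta V E s t F B"
  shows "{v\<in>V. sink s Z v} = B" and "\<forall>r\<in>B. \<exists>f\<in>F. forest_root s t Z f = r"
  using functional_forest.Theta_imp_sinks_roots[OF Theta_forest[OF assms] assms finite_B] by auto

lemma root_top_node:
  assumes ff: "functional_forest V s t Z" and ZE: "Z \<subseteq> E" and sinks: "{v\<in>V. sink s Z v} = B"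
  shows "forest_root s t Z (m + 1) = (if k = d + 1 then lB else m + 1)"
proof -
  interpret functional_forest V s t Z by (rule ff)
  have top: "m + 1 \<in> V" by simp
  show ?thesis
  proof (cases "k = d + 1")
    case True
    have closed: "\<forall>e\<in>Z. s e \<in> Nblk mm d 0 \<longrightarrow> t e \<in> Nblk mm d 0"
      using A_compatible_Nblk_zero_closed[OF compat] ZE edges_in_V by blast
    have "m + 1 \<in> Nblk mm d 0" using Nblk_zero[of mm d] msum_split[of mm d] by simp
    then have "root (m + 1) \<in> Nblk mm d 0 \<inter> B"
      using root_in_closed[OF closed] root_sink[OF top] root_in[OF top] sinks by blast
    moreover have "Bt \<inter> Nblk mm d 0 = {}" using Bk_last_Nblk_zero Bt True by blast
    ultimately show ?thesis using True by auto
  next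
    case False
    then have "sink s Z (m + 1)" using Bk_top_node[OF False Bt] sinks by auto
    then show ?thesis using False root_of_sink by simp
  qed
qed

lemma root_path_jj_avoids_exchange:
  assumes zeta: "\<zeta> \<in> Theta V E s t F B" and X: "X \<subseteq> \<zeta> \<inter> im_mu E \<pi> \<mu>"
    and exch: "exchange \<zeta> X \<in> Theta V E s t F B" and i: "i \<in> {1..d}"
  shows "root_path_edges s t \<zeta> (jj i) \<inter> X = {}"
proof -
  let ?Z' = "exchange \<zeta> X"
  have ff': "functional_forest V s t ?Z'" by (rule Theta_forest[OF exch])
  have Z'E: "?Z' \<subseteq> E" using exch unfolding Theta_def by blast
  have jj_V: "jj i \<in> V" using jj_mem[OF i] by blast
  have separated: "forest_root s t ?Z' (jj i) \<noteq> forest_root s t ?Z' (m + 1)"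
    using card_roots_distinct[OF Theta_sinks_roots(2)[OF exch] F_eq card_B i] .
  have star_i: "\<forall>l'\<in>{1..m}. \<forall>es. dpath s t E (jj i) l' es \<and> (\<exists>e\<in>set es. e \<in> Eneg E \<pi>)
      \<longrightarrow> m + 1 \<in> set (jj i # map t es)"
    using star i by blast
  have "root_path_edges s t ?Z' (jj i) \<inter> Eneg E \<pi> = {}"
    by (rule functional_forest.root_path_edges_avoid[OF ff' Z'E refl jj_V separated star_i])
  then show ?thesis
    by (rule root_path_mu_exchange[OF Pg Theta_forest[OF zeta] ff' X jj_V])
qed

lemma exchange_Un_Theta:
  assumes zeta: "\<zeta> \<in> Theta V E s t F B"
    and X1: "X1 \<subseteq> \<zeta> \<inter> im_mu E \<pi> \<mu>" "exchange \<zeta> X1 \<in> Theta V E s t F B"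
    and X2: "X2 \<subseteq> \<zeta> \<inter> im_mu E \<pi> \<mu>" "exchange \<zeta> X2 \<in> Theta V E s t F B"
  shows "exchange \<zeta> (X1 \<union> X2) \<in> Theta V E s t F B"
proof -
  let ?U = "X1 \<union> X2"
  let ?ZU = "exchange \<zeta> ?U"
  have ff: "functional_forest V s t \<zeta>" by (rule Theta_forest[OF zeta])
  have \<zeta>E: "\<zeta> \<subseteq> E" using zeta unfolding Theta_def by blast
  have U: "?U \<subseteq> \<zeta> \<inter> im_mu E \<pi> \<mu>" and U_im: "?U \<subseteq> im_mu E \<pi> \<mu>" using X1 X2 by blast+
  have "\<not> dcycle s t ?ZU es" for es
    by (rule mu_exchange_Un_no_dcycle[OF Pg \<zeta>E U_im
          functional_forest.no_dcycle[OF Theta_forest[OF X1(2)]]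
          functional_forest.no_dcycle[OF Theta_forest[OF X2(2)]]])
  then have ffU: "functional_forest V s t ?ZU"
    by (rule mu_exchange_functional_forest[OF Pg ff \<zeta>E U edges_in_V])
  have ZUE: "?ZU \<subseteq> E" by (rule mu_exchange_subset[OF Pg \<zeta>E U_im])
  have same_sinks: "\<forall>v. sink s ?ZU v = sink s \<zeta> v" using sink_mu_exchange[OF Pg U] by blast
  obtain sinks_\<zeta>: "{v\<in>V. sink s \<zeta> v} = B" and rooted_\<zeta>: "\<forall>r\<in>B. \<exists>f\<in>F. forest_root s t \<zeta> f = r"
    using Theta_sinks_roots[OF zeta] by blast
  have sinks: "{v\<in>V. sink s ?ZU v} = B" using same_sinks sinks_\<zeta> by simp
  have same_root: "forest_root s t ?ZU f = forest_root s t \<zeta> f" if fF: "f \<in> F" for f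
  proof (cases "f = m + 1")
    case True
    then show ?thesis using root_top_node[OF ffU ZUE sinks] root_top_node[OF ff \<zeta>E sinks_\<zeta>] by simp
  next
    case False
    then obtain i where i: "i \<in> {1..d}" and f: "f = jj i" using fF unfolding F_eq by blast
    have "root_path_edges s t \<zeta> f \<subseteq> \<zeta> - ?U"
      using root_path_jj_avoids_exchange[OF zeta X1 i] root_path_jj_avoids_exchange[OF zeta X2 i]
        functional_forest.root_path_edges_subset[OF ff] unfolding f by blast
    then have "root_path_edges s t \<zeta> f \<subseteq> ?ZU" unfolding mu_exchange_def by blast
    then show ?thesis using root_path_transfer(1)[OF ff ffU same_sinks] jj_mem[OF i] f by blast
  qed
  have "\<forall>r\<in>B. \<exists>f\<in>F. forest_root s t ?ZU f = r"
    using rooted_\<zeta> same_root by metis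
  with sinks show ?thesis
    by (intro functional_forest.sinks_roots_imp_Theta[OF ffU ZUE F_subset])
qed

end

theorem lemma5p3:
  fixes mm :: "nat \<Rightarrow> nat" and d :: nat
    and A :: "nat \<Rightarrow> nat \<Rightarrow> 'a::ordered_comm_ring" and b :: "nat \<Rightarrow> 'a"
    and jj :: "nat \<Rightarrow> nat"
    and E :: "'e set" and s t :: "'e \<Rightarrow> nat" and \<pi> :: "'e \<Rightarrow> 'a" and \<mu> :: "'e \<Rightarrow> 'e set"
    and k lB :: nat and Bt :: "nat set" and \<zeta> E1 E2 :: "'e set"
  defines "m \<equiv> msum mm d"
  defines "F \<equiv> Fset mm d jj"
  defines "EF \<equiv> (\<lambda>Z. {X. X \<subseteq> Z \<inter> im_mu E \<pi> \<mu> \<and>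
                 (Z - X) \<union> mu_star E \<pi> \<mu> ` X \<in> Theta {1..m+1} E s t F (Bt \<union> {lB})})"
  assumes blocks: "block_structure mm d A b jj"
    and graph: "multidigraph (m + 1) E s t"
    and compat: "A_compatible mm d A b jj E s t \<pi>"
    and Pg: "P_graph E s t \<pi> \<mu>"
    and star: "\<forall>l'\<in>{1..m}. \<forall>i\<in>{1..d}. \<forall>es. dpath s t E (jj i) l' es
                 \<and> (\<exists>e\<in>set es. e \<in> Eneg E \<pi>) \<longrightarrow> m + 1 \<in> set (jj i # map t es)"
    and k: "k \<in> {1..d+1}"
    and Bt: "Bt \<in> Bk mm d k"
    and lB_mem: "lB \<in> {1..m+1} - Bt"
    and zeta: "\<zeta> \<in> Theta {1..m+1} E s t F (Bt \<union> {lB})"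
    and E1: "E1 \<in> EF \<zeta>" and E2: "E2 \<in> EF \<zeta>"
  shows "E1 \<union> E2 \<in> EF \<zeta>"
proof -
  have setting: "compatible_P_graph mm d A b jj E s t \<pi> \<mu> k lB Bt"
    using blocks graph compat Pg star k Bt lB_mem unfolding m_def by unfold_locales
  have "E1 \<union> E2 \<subseteq> \<zeta> \<inter> im_mu E \<pi> \<mu>" using E1 E2 unfolding EF_def by blast
  moreover have "mu_exchange E \<pi> \<mu> \<zeta> (E1 \<union> E2) \<in> Theta {1..m+1} E s t F (Bt \<union> {lB})"
    using compatible_P_graph.exchange_Un_Theta[OF setting] zeta E1 E2
    unfolding EF_def m_def F_def mu_exchange_def by blast
  ultimately show ?thesis unfolding EF_def mu_exchange_def by blast
qed

end
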